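(* The general solution to the geodesic equations on $\mathcal{F}_{1,2,3}$ with the metric $$ds^2=\frac{1}{\alpha}\left|\bar{u}_1\circ du_2\right|^2+\frac{1}{\beta}\,du_3\left(\mathrm{Id}-\bar{u}_3\otimes u_3\right)d\bar{u}_3 \;=\;\frac{1}{\alpha}\left|\bar{u}_1\circ du_2\right|^2+\frac{1}{\beta}\left(\left|\bar{u}_2\circ du_3\right|^2+\left|\bar{u}_1\circ du_3\right|^2\right)$$ has the form $$\begin{pmatrix} u_1(t)\\ u_2(t)\\ u_3(t)\end{pmatrix}=G(t)\exp\left[\begin{pmatrix}0 & \frac{1}{\alpha}A^0_{21} & \frac{1}{\beta}A^0_{31}\\ -\frac{1}{\alpha}\bar{A}^0_{21} & 0 & \frac{1}{\beta}A^0_{32}\\ -\frac{1}{\beta}\bar{A}^0_{31} & -\frac{1}{\beta}\bar{A}^0_{32} & 0\end{pmatrix}\beta t\right]\begin{pmatrix} u_1(0)\\ u_2(0)\\ u_3(0)\end{pmatrix},$$ where $$G(t)=\begin{pmatrix}\exp\left[\begin{pmatrix}0 & \frac{1}{\alpha}A^0_{21}\\ -\frac{1}{\alpha}\bar{A}^0_{21} & 0\end{pmatrix}(\alpha-\beta)t\right] & \\ & 1\end{pmatrix}$$ and $A^0_{21},A^0_{31},A^0_{32}$ are the initial data.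
   Context: A point of the complete flag manifold $\mathcal{F}_{1,2,3}=\mathrm{U}(3)/\mathrm{U}(1)^3$ is parametrized by an orthonormal triple of vectors $u_1,u_2,u_3\in\mathbb{C}^3$ ($\bar{u}_i\circ u_j:=\sum_k \bar{u}_i^k u_j^k=\delta_{ij}$), each defined up to a phase; $\alpha,\beta>0$ are real parameters. The geodesic problem is the free-particle problem with Lagrangian obtained from the metric by $du_i\to\dot u_i$, with gauge group $\mathrm{U}(1)^3$ acting by $u_i\to e^{i\varphi_i(t)}u_i$; the gauge is fixed by $\bar{u}_i\circ\dot{u}_i=0$, $i=1,2,3$. The notation is $A_{ij}(t):=\bar{u}_i\circ\dot{u}_j(t)$ (so $A_{ij}=-\bar{A}_{ji}$) and $A^0_{ij}:=\bar{u}_i\circ\dot{u}_j(0)$. *)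

theory Defs
  imports "HOL-Analysis.Analysis"
begin

text \<open>A point of the flag manifold is represented by the 3x3 complex matrix U whose
  rows are the vectors u1 = U$1, u2 = U$2, u3 = U$3 (components U$i$k, k ranging over
  the three elements of the index type 3; note (3::3) is the third index, distinct from 1 and 2).\<close>

definition cdot :: "complex^'n \<Rightarrow> complex^'n \<Rightarrow> complex" where
  "cdot x y = (\<Sum>k\<in>UNIV. cnj (x $ k) * y $ k)"

definition orthonormal_triple :: "complex^3^3 \<Rightarrow> bool" where
  "orthonormal_triple U \<longleftrightarrow> (\<forall>i j. cdot (U $ i) (U $ j) = (if i = j then 1 else 0))"

text \<open>Tangent vectors at U to the constraint manifold (kernel of the derivative of the
  orthonormality constraints).\<close>
definition tangent_vec :: "complex^3^3 \<Rightarrow> complex^3^3 \<Rightarrow> bool" where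
  "tangent_vec U X \<longleftrightarrow> (\<forall>i j. cdot (X $ i) (U $ j) + cdot (U $ i) (X $ j) = 0)"

text \<open>Lagrangian obtained from the metric by du_i -> dot u_i (V is the velocity).\<close>
definition lagr :: "real \<Rightarrow> real \<Rightarrow> complex^3^3 \<Rightarrow> complex^3^3 \<Rightarrow> real" where
  "lagr \<alpha> \<beta> U V = (1/\<alpha>) * (cmod (cdot (U $ 1) (V $ 2)))^2
      + (1/\<beta>) * ((cmod (cdot (U $ 2) (V $ 3)))^2 + (cmod (cdot (U $ 1) (V $ 3)))^2)"

definition dL_dV :: "real \<Rightarrow> real \<Rightarrow> complex^3^3 \<Rightarrow> complex^3^3 \<Rightarrow> complex^3^3 \<Rightarrow> real" where
  "dL_dV \<alpha> \<beta> U V X = deriv (\<lambda>e. lagr \<alpha> \<beta> U (V + e *\<^sub>R X)) 0"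

definition dL_dU :: "real \<Rightarrow> real \<Rightarrow> complex^3^3 \<Rightarrow> complex^3^3 \<Rightarrow> complex^3^3 \<Rightarrow> real" where
  "dL_dU \<alpha> \<beta> U V X = deriv (\<lambda>e. lagr \<alpha> \<beta> (U + e *\<^sub>R X) V) 0"

text \<open>Geodesic equations = Euler-Lagrange equations of the free particle constrained to the
  manifold of orthonormal triples (holonomic constraints): for every tangent vector X at U(t),
  d/dt (dL/dV (U,U') X) = dL/dU (U,U') X.\<close>
definition geodesic_eq :: "real \<Rightarrow> real \<Rightarrow> (real \<Rightarrow> complex^3^3) \<Rightarrow> bool" where
  "geodesic_eq \<alpha> \<beta> U \<longleftrightarrow>
     (\<forall>t. orthonormal_triple (U t)) \<and>
     (\<forall>t. U differentiable (at t)) \<and>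
     (\<forall>t X. tangent_vec (U t) X \<longrightarrow>
        ((\<lambda>s. dL_dV \<alpha> \<beta> (U s) (vector_derivative U (at s)) X) has_real_derivative
            dL_dU \<alpha> \<beta> (U t) (vector_derivative U (at t)) X) (at t))"

definition gauge_fixed :: "(real \<Rightarrow> complex^3^3) \<Rightarrow> bool" where
  "gauge_fixed U \<longleftrightarrow> (\<forall>t i. cdot (U t $ i) (vector_derivative U (at t) $ i) = 0)"

fun matpow :: "complex^'n^'n \<Rightarrow> nat \<Rightarrow> complex^'n^'n" where
  "matpow A 0 = mat 1"
| "matpow A (Suc k) = A ** matpow A k"

definition mat_exp :: "complex^'n^'n \<Rightarrow> complex^'n^'n" where
  "mat_exp A = (\<Sum>k. (1 / fact k) *\<^sub>R matpow A k)"

definition idx32 :: "3 \<Rightarrow> 2" where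
  "idx32 i = (if i = 1 then 1 else 2)"

definition blockdiag21 :: "complex^2^2 \<Rightarrow> complex^3^3" where
  "blockdiag21 E = (\<chi> i j. if i = 3 \<or> j = 3 then (if i = j then 1 else 0)
                            else E $ idx32 i $ idx32 j)"

definition mat2 :: "complex \<Rightarrow> complex \<Rightarrow> complex \<Rightarrow> complex \<Rightarrow> complex^2^2" where
  "mat2 a b c d = (\<chi> i j. if i = 1 then (if j = 1 then a else b) else (if j = 1 then c else d))"

definition mat3 :: "complex \<Rightarrow> complex \<Rightarrow> complex \<Rightarrow> complex \<Rightarrow> complex \<Rightarrow> complex
     \<Rightarrow> complex \<Rightarrow> complex \<Rightarrow> complex \<Rightarrow> complex^3^3" where
  "mat3 a11 a12 a13 a21 a22 a23 a31 a32 a33 = (\<chi> i j.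
     if i = 1 then (if j = 1 then a11 else if j = 2 then a12 else a13)
     else if i = 2 then (if j = 1 then a21 else if j = 2 then a22 else a23)
     else (if j = 1 then a31 else if j = 2 then a32 else a33))"

end

(* Along a geodesic the velocity is V = K U with K skew-Hermitian (K i j = A j i). The
   Lagrangian is invariant under the right action U |-> U Omega of U(3), so by Noether's
   theorem the charge U* M U is conserved, where M(t) is the matrix of the exponent built from
   A(t) instead of A^0. Hence M(t) = U(t) N U(t)* with N constant, and M' = K M - M K. The
   Lagrangian gives K = beta M + (alpha - beta) B(M), B the upper left 2x2 block; the
   commutator of B(M) and M has zero upper block, so B(M) is constant and
   M(t) = G(t) M(0) G(t)*. Then C(t) = G(t) exp(beta t M(0)) U(0) solves the same equation
   C' = K C as U with the same initial value, and as K is skew-Hermitian, C* U is constant,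
   so U = C.
   The velocity is only assumed to exist pointwise; continuity of A(t), needed for Noether's
   theorem, is extracted from the Euler-Lagrange equations themselves. *)

theory Submission
  imports Defs
begin

section \<open>Calculus\<close>

lemma bounded_bilinear_matrix_matrix_mult:
  "bounded_bilinear ((**) :: 'a::{real_normed_algebra_1,euclidean_space}^'n^'m \<Rightarrow> 'a^'p^'n \<Rightarrow> 'a^'p^'m)"
  unfolding bilinear_conv_bounded_bilinear[symmetric] bilinear_def
  by (auto intro!: linearI simp: vec_eq_iff matrix_matrix_mult_def distrib_left distrib_right
      sum.distrib scaleR_sum_right)

interpretation matrix_mult: bounded_bilinear
  "(**) :: 'a::{real_normed_algebra_1,euclidean_space}^'n^'m \<Rightarrow> 'a^'p^'n \<Rightarrow> 'a^'p^'m"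
  by (rule bounded_bilinear_matrix_matrix_mult)

lemma has_vector_derivative_componentwise:
  fixes f :: "real \<Rightarrow> 'a::real_normed_vector^'n"
  shows "(f has_vector_derivative f') (at t) \<longleftrightarrow>
    (\<forall>i. ((\<lambda>s. f s $ i) has_vector_derivative f' $ i) (at t))"
proof
  assume "(f has_vector_derivative f') (at t)"
  then show "\<forall>i. ((\<lambda>s. f s $ i) has_vector_derivative f' $ i) (at t)"
    using bounded_linear.has_vector_derivative[OF bounded_linear_vec_nth] by blast
next
  assume "\<forall>i. ((\<lambda>s. f s $ i) has_vector_derivative f' $ i) (at t)"
  then have "((\<lambda>y. ((f y - f t) - (y - t) *\<^sub>R f') /\<^sub>R norm (y - t)) \<longlongrightarrow> 0) (at t)"
    unfolding has_vector_derivative_def has_derivative_at_within by (intro vec_tendstoI) simp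
  then show "(f has_vector_derivative f') (at t)"
    unfolding has_vector_derivative_def has_derivative_at_within
    by (simp add: bounded_linear_scaleR_left)
qed

lemma has_vector_derivative_matrix_entries:
  fixes f :: "real \<Rightarrow> 'a::real_normed_vector^'n^'m"
  shows "(f has_vector_derivative f') (at t) \<longleftrightarrow>
    (\<forall>i j. ((\<lambda>s. f s $ i $ j) has_vector_derivative f' $ i $ j) (at t))"
  by (simp only: has_vector_derivative_componentwise)

lemma has_vector_derivative_vec_nth:
  "(F has_vector_derivative F') (at t) \<Longrightarrow> ((\<lambda>s. F s $ i) has_vector_derivative F' $ i) (at t)"
  by (simp add: has_vector_derivative_componentwise)

lemma has_vector_derivative_zero_const:
  fixes f :: "real \<Rightarrow> 'a::real_normed_vector"
  assumes "\<And>t. (f has_vector_derivative 0) (at t)"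
  shows "f t = f s"
proof -
  obtain c where "\<And>x. f x = c"
    using has_vector_derivative_zero_constant[of UNIV f] assms by auto
  then show ?thesis by simp
qed

lemma isCont_complex_if_isCont_Re:
  fixes g :: "real \<Rightarrow> complex"
  assumes "\<And>z. isCont (\<lambda>s. Re (z * g s)) t"
  shows "isCont g t"
proof -
  have g: "g = (\<lambda>s. of_real (Re (g s)) - \<i> * of_real (Re (\<i> * g s)))"
    by (simp add: fun_eq_iff complex_eq_iff)
  show ?thesis
    using assms[of 1] assms[of \<i>] by (subst g) (intro continuous_intros, simp_all)
qed

lemma isCont_if_cnj_mult_eq:
  fixes f n d :: "real \<Rightarrow> complex"
  assumes "isCont n t" "isCont d t" "d t \<noteq> 0" "\<And>s. cnj (f s) * d s = n s"
  shows "isCont f t"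
proof -
  have "eventually (\<lambda>s. d s \<noteq> 0) (nhds t)"
    using assms(2,3) unfolding eventually_nhds_conv_at isCont_def
    by (auto intro: tendsto_imp_eventually_ne)
  then have "eventually (\<lambda>s. f s = cnj (n s / d s)) (nhds t)"
    by eventually_elim (simp add: assms(4)[symmetric])
  then have "isCont f t \<longleftrightarrow> isCont (\<lambda>s. cnj (n s / d s)) t"
    by (rule isCont_cong)
  moreover have "isCont (\<lambda>s. cnj (n s / d s)) t"
    using assms(1-3) by (intro continuous_intros)
  ultimately show ?thesis by simp
qed

lemma DERIV_mult_vanishing:
  fixes P Y :: "real \<Rightarrow> real"
  assumes "isCont P t" "(Y has_real_derivative Y') (at t)" "Y t = 0"
  shows "((\<lambda>s. P s * Y s) has_real_derivative P t * Y') (at t)"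
proof -
  obtain g where g: "\<And>z. Y z - Y t = g z * (z - t)" "isCont g t" "g t = Y'"
    using assms(2) CARAT_DERIV by blast
  show ?thesis
  proof (subst CARAT_DERIV, intro exI conjI allI)
    show "P z * Y z - P t * Y t = P z * g z * (z - t)" for z
      using g(1)[of z] assms(3) by simp
    show "isCont (\<lambda>z. P z * g z) t"
      using assms(1) g(2) by (intro continuous_intros)
  qed (simp add: g(3))
qed

lemma has_real_derivative_Re_mult_vanishing:
  fixes p y :: "real \<Rightarrow> complex"
  assumes "isCont p t" "(y has_vector_derivative y') (at t)" "y t = 0"
  shows "((\<lambda>s. Re (p s * y s)) has_real_derivative Re (p t * y')) (at t)"
proof -
  have "((\<lambda>s. Re (y s)) has_real_derivative Re y') (at t)"
    "((\<lambda>s. Im (y s)) has_real_derivative Im y') (at t)"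
    using assms(2) unfolding has_vector_derivative_complex_iff by auto
  then have "((\<lambda>s. Re (p s) * Re (y s) - Im (p s) * Im (y s)) has_real_derivative
      Re (p t) * Re y' - Im (p t) * Im y') (at t)"
    using assms(1,3) by (intro DERIV_diff DERIV_mult_vanishing continuous_intros) simp_all
  then show ?thesis by simp
qed

definition ctranspose :: "complex^'n^'m \<Rightarrow> complex^'m^'n" where
  "ctranspose X = (\<chi> i j. cnj (X $ j $ i))"

definition skew_hermitian :: "complex^'n^'n \<Rightarrow> bool" where
  "skew_hermitian X \<longleftrightarrow> ctranspose X = - X"

lemma ctranspose_nth [simp]: "ctranspose X $ i $ j = cnj (X $ j $ i)"
  by (simp add: ctranspose_def)

lemma ctranspose_ctranspose [simp]: "ctranspose (ctranspose X) = X"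
  by (simp add: vec_eq_iff)

lemma ctranspose_mat [simp]: "ctranspose (mat 1) = mat 1"
  by (simp add: vec_eq_iff mat_def)

lemma ctranspose_matrix_mult: "ctranspose (A ** B) = ctranspose B ** ctranspose A"
  by (simp add: vec_eq_iff matrix_matrix_mult_def mult.commute)

lemma ctranspose_diff: "ctranspose (A - B) = ctranspose A - ctranspose B"
  and ctranspose_scaleR: "ctranspose (c *\<^sub>R A) = c *\<^sub>R ctranspose A"
  by (simp_all add: vec_eq_iff)

lemma skew_hermitian_nth: "skew_hermitian X \<Longrightarrow> cnj (X $ i $ j) = - X $ j $ i"
  unfolding skew_hermitian_def by (metis ctranspose_nth vector_uminus_component)

lemma skew_hermitian_congruence:
  "skew_hermitian X \<Longrightarrow> skew_hermitian (W ** X ** ctranspose W)"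
  unfolding skew_hermitian_def
  by (simp add: ctranspose_matrix_mult matrix_mult.minus_left matrix_mult.minus_right matrix_mul_assoc)

lemma has_vector_derivative_ctranspose:
  "(F has_vector_derivative F') (at t) \<Longrightarrow>
    ((\<lambda>s. ctranspose (F s)) has_vector_derivative ctranspose F') (at t)"
  unfolding has_vector_derivative_matrix_entries by (auto intro: has_vector_derivative_cnj)

lemma ctranspose_mult_const_if_skew_hermitian_ode:
  fixes X Y L :: "real \<Rightarrow> complex^'n^'n"
  assumes "\<And>s. (X has_vector_derivative L s ** X s) (at s)"
    and "\<And>s. (Y has_vector_derivative L s ** Y s) (at s)"
    and "\<And>s. skew_hermitian (L s)"
  shows "ctranspose (X s) ** Y s = ctranspose (X 0) ** Y 0"
proof (rule has_vector_derivative_zero_const)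
  fix t
  have "((\<lambda>s. ctranspose (X s) ** Y s) has_vector_derivative
      ctranspose (X t) ** (L t ** Y t) + ctranspose (L t ** X t) ** Y t) (at t)"
    by (intro matrix_mult.has_vector_derivative has_vector_derivative_ctranspose assms)
  then show "((\<lambda>s. ctranspose (X s) ** Y s) has_vector_derivative 0) (at t)"
    using assms(3)[of t] unfolding skew_hermitian_def
    by (simp add: ctranspose_matrix_mult matrix_mult.minus_left matrix_mult.minus_right matrix_mul_assoc)
qed

lemma Re_trace_square_skew_hermitian:
  assumes "skew_hermitian X"
  shows "Re (trace (X ** X)) = - (\<Sum>i\<in>UNIV. \<Sum>k\<in>UNIV. (cmod (X $ i $ k))\<^sup>2)"
proof -
  have "Re (X $ i $ k * X $ k $ i) = - (cmod (X $ i $ k))\<^sup>2" for i k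
  proof -
    have "X $ k $ i = - cnj (X $ i $ k)"
      using skew_hermitian_nth[OF assms, of i k] by simp
    then show ?thesis
      unfolding cmod_power2 by (simp add: power2_eq_square)
  qed
  then show ?thesis
    by (simp add: trace_def matrix_matrix_mult_def sum_negf)
qed

lemma skew_hermitian_eqI:
  assumes "skew_hermitian X" "skew_hermitian Y"
    and "\<And>\<Omega>. skew_hermitian \<Omega> \<Longrightarrow> Re (trace (X ** \<Omega>)) = Re (trace (Y ** \<Omega>))"
  shows "X = Y"
proof -
  have skew: "skew_hermitian (X - Y)"
    using assms(1,2) by (simp add: skew_hermitian_def ctranspose_diff)
  have "Re (trace ((X - Y) ** (X - Y))) = 0"
    using assms(3)[OF skew] by (simp add: matrix_mult.diff_left trace_sub)
  then have "(\<Sum>i\<in>UNIV. \<Sum>k\<in>UNIV. (cmod ((X - Y) $ i $ k))\<^sup>2) = 0"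
    unfolding Re_trace_square_skew_hermitian[OF skew] by simp
  then have "(\<Sum>k\<in>UNIV. (cmod ((X - Y) $ i $ k))\<^sup>2) = 0" for i
    by (subst (asm) sum_nonneg_eq_0_iff) (auto intro: sum_nonneg)
  then have "(X - Y) $ i $ k = 0" for i k
    by (subst (asm) sum_nonneg_eq_0_iff) auto
  then show ?thesis
    by (simp add: vec_eq_iff)
qed

lemma matpow_scaleR: "matpow (t *\<^sub>R N) k = (t ^ k) *\<^sub>R matpow (N::complex^'n^'n) k"
  by (induction k) (simp_all add: matrix_mult.scaleR_left matrix_mult.scaleR_right)

lemma summable_norm_mat_exp_series:
  "summable (\<lambda>k. norm ((1 / fact k) *\<^sub>R matpow (A::complex^'n^'n) k))"
proof -
  obtain K where K: "K > 0" "\<And>X Y. norm ((X::complex^'n^'n) ** (Y::complex^'n^'n)) \<le> norm X * norm Y * K"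
    using matrix_mult.pos_bounded by blast
  have bound: "norm (matpow A k) \<le> norm (mat 1 :: complex^'n^'n) * (K * norm A) ^ k" for k
  proof (induction k)
    case (Suc k)
    have "norm (matpow A (Suc k)) \<le> K * norm A * norm (matpow A k)"
      using K(2)[of A "matpow A k"] by (simp add: ac_simps)
    also have "\<dots> \<le> K * norm A * (norm (mat 1 :: complex^'n^'n) * (K * norm A) ^ k)"
      using K(1) by (intro mult_left_mono Suc) auto
    finally show ?case by (simp add: ac_simps)
  qed simp
  show ?thesis
  proof (rule summable_comparison_test')
    show "summable (\<lambda>k. norm (mat 1 :: complex^'n^'n) * (inverse (fact k) * (K * norm A) ^ k))"
      by (intro summable_mult summable_exp)
    show "norm (norm ((1 / fact k) *\<^sub>R matpow A k))
        \<le> norm (mat 1 :: complex^'n^'n) * (inverse (fact k) * (K * norm A) ^ k)" for k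
      using bound[of k] by (simp add: divide_simps ac_simps)
  qed
qed

lemma mat_exp_nth: "mat_exp (A::complex^'n^'n) $ i $ j = (\<Sum>k. matpow A k $ i $ j / fact k)"
proof -
  have "bounded_linear (\<lambda>X::complex^'n^'n. X $ i $ j)"
    using bounded_linear_compose[OF bounded_linear_vec_nth bounded_linear_vec_nth] .
  from bounded_linear.sums[OF this summable_sums[OF summable_norm_cancel[OF summable_norm_mat_exp_series]]]
  have "(\<lambda>k. (1 / fact k) *\<^sub>R (matpow A k $ i $ j)) sums (mat_exp A $ i $ j)"
    unfolding mat_exp_def by simp
  then show ?thesis by (simp add: sums_iff scaleR_conv_of_real)
qed

lemma summable_mat_exp_nth_powser:
  "summable (\<lambda>k. matpow (N::complex^'n^'n) k $ i $ j / fact k * y ^ k)"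
proof (rule summable_norm_cancel, rule summable_comparison_test')
  show "summable (\<lambda>k. norm ((1 / fact k) *\<^sub>R matpow (norm y *\<^sub>R N) k))"
    by (rule summable_norm_mat_exp_series)
  fix k
  have "norm (matpow N k $ i $ j) \<le> norm (matpow N k)"
    using Finite_Cartesian_Product.norm_nth_le[of "matpow N k $ i" j]
      Finite_Cartesian_Product.norm_nth_le[of "matpow N k" i] by linarith
  then have "norm (matpow N k $ i $ j) * norm y ^ k / fact k \<le> norm (matpow N k) * norm y ^ k / fact k"
    by (intro divide_right_mono mult_right_mono) auto
  then show "norm (norm (matpow N k $ i $ j / fact k * y ^ k))
      \<le> norm ((1 / fact k) *\<^sub>R matpow (norm y *\<^sub>R N) k)"
    by (simp add: matpow_scaleR norm_mult norm_divide norm_power ac_simps)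
qed

lemma mat_exp_scaleR_nth:
  "mat_exp (t *\<^sub>R (N::complex^'n^'n)) $ i $ j = (\<Sum>k. matpow N k $ i $ j / fact k * of_real t ^ k)"
  unfolding mat_exp_nth matpow_scaleR vector_scaleR_component by (simp add: scaleR_conv_of_real ac_simps)

text \<open>Entrywise, \<open>mat_exp (t *\<^sub>R N)\<close> is a power series in \<open>t\<close> with infinite radius, so it
  may be differentiated termwise; the derived coefficients are those of \<open>N ** mat_exp (t *\<^sub>R N)\<close>.\<close>
lemma has_vector_derivative_mat_exp:
  fixes N :: "complex^'n^'n"
  shows "((\<lambda>t. mat_exp (t *\<^sub>R N)) has_vector_derivative N ** mat_exp (t *\<^sub>R N)) (at t)"
  unfolding has_vector_derivative_matrix_entries
proof (intro allI)
  fix i j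
  define c where "c l k = matpow N k $ l $ j / fact k" for l k
  have summable: "summable (\<lambda>k. c l k * y ^ k)" for l y
    unfolding c_def by (rule summable_mat_exp_nth_powser)
  have "diffs (c i) k = (\<Sum>l\<in>UNIV. N $ i $ l * c l k)" for k
    by (simp add: diffs_def c_def matrix_matrix_mult_def divide_simps sum_distrib_left
        sum_divide_distrib ac_simps del: of_nat_Suc)
  then have "(\<Sum>k. diffs (c i) k * z ^ k) = (\<Sum>k. \<Sum>l\<in>UNIV. N $ i $ l * (c l k * z ^ k))" for z
    by (simp add: sum_distrib_left sum_distrib_right ac_simps)
  also have "\<dots> z = (\<Sum>l\<in>UNIV. N $ i $ l * (\<Sum>k. c l k * z ^ k))" for z
    by (subst suminf_sum) (auto intro!: sum.cong suminf_mult summable_mult summable)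
  finally have diffs_eq: "(\<Sum>k. diffs (c i) k * z ^ k) = (\<Sum>l\<in>UNIV. N $ i $ l * (\<Sum>k. c l k * z ^ k))"
    for z .
  have "((\<lambda>t. \<Sum>k. c i k * of_real t ^ k) has_vector_derivative (\<Sum>k. diffs (c i) k * of_real t ^ k)) (at t)"
    by (rule has_vector_derivative_real_field termdiffs_strong_converges_everywhere summable)+
  then show "((\<lambda>s. mat_exp (s *\<^sub>R N) $ i $ j) has_vector_derivative (N ** mat_exp (t *\<^sub>R N)) $ i $ j) (at t)"
    unfolding diffs_eq by (simp add: mat_exp_scaleR_nth c_def matrix_matrix_mult_def)
qed

lemma mat_exp_zero: "mat_exp (0::complex^'n^'n) = mat 1"
proof -
  have "(\<lambda>k. (1 / fact k) *\<^sub>R matpow (0::complex^'n^'n) k) = (\<lambda>k. if k = 0 then mat 1 else 0)"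
    by (rule ext, rename_tac k, case_tac k) simp_all
  then show ?thesis
    unfolding mat_exp_def using sums_single[of 0 "\<lambda>_. mat 1 :: complex^'n^'n"] by (simp add: sums_iff)
qed

lemma has_vector_derivative_mat_exp_scaled:
  "((\<lambda>t. mat_exp ((c * t) *\<^sub>R N)) has_vector_derivative (c *\<^sub>R N) ** mat_exp ((c * t) *\<^sub>R N)) (at t)"
  using has_vector_derivative_mat_exp[of "c *\<^sub>R N" t] by (simp add: ac_simps)

lemma mat3_nth: "mat3 a11 a12 a13 a21 a22 a23 a31 a32 a33 $ i $ j =
  (if i = 1 then (if j = 1 then a11 else if j = 2 then a12 else a13)
   else if i = 2 then (if j = 1 then a21 else if j = 2 then a22 else a23)
   else (if j = 1 then a31 else if j = 2 then a32 else a33))"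
  by (simp add: mat3_def)

definition upper_block :: "complex^3^3 \<Rightarrow> complex^3^3" where
  "upper_block X = (\<chi> i j. if i \<noteq> 3 \<and> j \<noteq> 3 then X $ i $ j else 0)"

lemma upper_block_commutator_nth:
  "i \<noteq> 3 \<Longrightarrow> j \<noteq> 3 \<Longrightarrow> (upper_block X ** X - X ** upper_block X) $ i $ j = 0"
  by (simp add: upper_block_def matrix_matrix_mult_def sum_3)

lemma skew_hermitian_upper_block: "skew_hermitian X \<Longrightarrow> skew_hermitian (upper_block X)"
  unfolding skew_hermitian_def by (auto simp: vec_eq_iff upper_block_def dest: skew_hermitian_nth)

definition blockdiag20 :: "complex^2^2 \<Rightarrow> complex^3^3" where
  "blockdiag20 E = (\<chi> i j. if i = 3 \<or> j = 3 then 0 else E $ idx32 i $ idx32 j)"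

lemma has_vector_derivative_blockdiag21:
  "(E has_vector_derivative E') (at s) \<Longrightarrow>
    ((\<lambda>s. blockdiag21 (E s)) has_vector_derivative blockdiag20 E') (at s)"
  unfolding has_vector_derivative_matrix_entries
  by (auto simp: blockdiag21_def blockdiag20_def)

lemma blockdiag20_matrix_mult: "blockdiag20 (N ** E) = blockdiag20 N ** blockdiag21 E"
  unfolding vec_eq_iff forall_3
  by (simp add: blockdiag20_def blockdiag21_def idx32_def matrix_matrix_mult_def sum_3 sum_2)

lemma blockdiag20_scaleR: "blockdiag20 (c *\<^sub>R N) = c *\<^sub>R blockdiag20 N"
  by (simp add: vec_eq_iff blockdiag20_def)

lemma blockdiag21_mat: "blockdiag21 (mat 1) = mat 1"
  unfolding vec_eq_iff forall_3 by (simp add: blockdiag21_def idx32_def mat_def)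

lemma bounded_bilinear_cdot: "bounded_bilinear (cdot :: complex^'n \<Rightarrow> complex^'n \<Rightarrow> complex)"
  unfolding bilinear_conv_bounded_bilinear[symmetric] bilinear_def linear_iff cdot_def
  by (simp add: distrib_left distrib_right sum.distrib scaleR_sum_right)

interpretation cdot: bounded_bilinear "cdot :: complex^'n \<Rightarrow> complex^'n \<Rightarrow> complex"
  by (rule bounded_bilinear_cdot)

lemma cnj_cdot: "cnj (cdot x y) = cdot y x"
  by (simp add: cdot_def mult.commute)

lemma cdot_matrix_mult_left: "cdot ((S ** A) $ i) y = (\<Sum>k\<in>UNIV. cnj (S $ i $ k) * cdot (A $ k) y)"
  and cdot_matrix_mult_right: "cdot x ((S ** A) $ j) = (\<Sum>k\<in>UNIV. S $ j $ k * cdot x (A $ k))"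
  by (simp_all add: cdot_def matrix_matrix_mult_def sum_distrib_left sum_distrib_right ac_simps)
     (rule sum.swap)+

lemma cdot_matrix_mult_ctranspose_nth: "cdot (W $ i) ((W ** X) $ j) = (W ** X ** ctranspose W) $ j $ i"
  by (simp add: cdot_def matrix_matrix_mult_def sum_distrib_left sum_distrib_right ac_simps)

lemma cdot_skew_hermitian_right:
  assumes "skew_hermitian X"
  shows "cdot ((A ** X) $ i) (B $ j) = - cdot (A $ i) ((B ** X) $ j)"
  using skew_hermitian_nth[OF assms]
  by (simp add: cdot_def matrix_matrix_mult_def sum_distrib_left sum_distrib_right
      sum_negf[symmetric] ac_simps) (rule sum.swap)

lemma orthonormal_triple_iff_unitary:
  "orthonormal_triple W \<longleftrightarrow> W ** ctranspose W = mat 1"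
  unfolding orthonormal_triple_def
  by (auto simp: vec_eq_iff matrix_matrix_mult_def mat_def cdot_def mult.commute)

lemma tangent_vec_skew_hermitian_left:
  assumes "orthonormal_triple W" "skew_hermitian S"
  shows "tangent_vec W (S ** W)"
proof -
  have orth: "cdot (W $ i) (W $ j) = (if i = j then 1 else 0)" for i j
    using assms(1) unfolding orthonormal_triple_def by blast
  show ?thesis
    unfolding tangent_vec_def
    by (simp add: orth skew_hermitian_nth[OF assms(2)] cdot_matrix_mult_left cdot_matrix_mult_right
        if_distrib cong: if_cong)
qed

lemma tangent_vec_skew_hermitian_right:
  "skew_hermitian X \<Longrightarrow> tangent_vec W (W ** X)"
  unfolding tangent_vec_def by (simp add: cdot_skew_hermitian_right)

section \<open>The Lagrangian\<close>

definition lagr_polar ::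
  "real \<Rightarrow> real \<Rightarrow> complex^3^3 \<Rightarrow> complex^3^3 \<Rightarrow> complex^3^3 \<Rightarrow> complex^3^3
    \<Rightarrow> real" where
  "lagr_polar \<alpha> \<beta> U V P Q =
     (2/\<alpha>) * Re (cnj (cdot (U $ 1) (V $ 2)) * cdot (P $ 1) (Q $ 2))
   + (2/\<beta>) * (Re (cnj (cdot (U $ 2) (V $ 3)) * cdot (P $ 2) (Q $ 3))
              + Re (cnj (cdot (U $ 1) (V $ 3)) * cdot (P $ 1) (Q $ 3)))"

lemma has_real_derivative_lagr_terms:
  "((\<lambda>e. (1/\<alpha>) * (cmod (a + e *\<^sub>R a'))\<^sup>2
        + (1/\<beta>) * ((cmod (b + e *\<^sub>R b'))\<^sup>2 + (cmod (c + e *\<^sub>R c'))\<^sup>2))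
    has_real_derivative
      (2/\<alpha>) * Re (cnj a * a') + (2/\<beta>) * (Re (cnj b * b') + Re (cnj c * c'))) (at 0)"
proof -
  have square: "(cmod (x + e *\<^sub>R y))\<^sup>2 = (cmod x)\<^sup>2 + 2 * e * Re (cnj x * y) + e\<^sup>2 * (cmod y)\<^sup>2"
    for x y :: complex and e :: real
    unfolding cmod_power2 scaleR_conv_of_real by (simp add: power2_eq_square algebra_simps)
  have "((\<lambda>e. (cmod (x + e *\<^sub>R y))\<^sup>2) has_real_derivative 2 * Re (cnj x * y)) (at 0)"
    for x y :: complex
    unfolding square by (auto intro!: derivative_eq_intros)
  then show ?thesis
    by (intro DERIV_cong[OF DERIV_add[OF DERIV_cmult DERIV_cmult[OF DERIV_add]]]) simp_all
qed

lemma dL_dV_eq: "dL_dV \<alpha> \<beta> U V X = lagr_polar \<alpha> \<beta> U V U X"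
  unfolding dL_dV_def lagr_def lagr_polar_def cdot.add_right cdot.scaleR_right
    vector_add_component vector_scaleR_component
  by (rule DERIV_imp_deriv has_real_derivative_lagr_terms)+

lemma dL_dU_eq: "dL_dU \<alpha> \<beta> U V X = lagr_polar \<alpha> \<beta> U V X V"
  unfolding dL_dU_def lagr_def lagr_polar_def cdot.add_left cdot.scaleR_left
    vector_add_component vector_scaleR_component
  by (rule DERIV_imp_deriv has_real_derivative_lagr_terms)+

lemma lagr_polar_add:
  "lagr_polar \<alpha> \<beta> U V P (Q + Q') = lagr_polar \<alpha> \<beta> U V P Q + lagr_polar \<alpha> \<beta> U V P Q'"
  by (simp add: lagr_polar_def cdot.add_right algebra_simps)

text \<open>Infinitesimal invariance of the Lagrangian under the right action
  \<open>U \<mapsto> U ** \<Omega>\<close> of \<open>U(3)\<close>.\<close>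
lemma lagr_polar_right_invariant:
  "skew_hermitian \<Omega> \<Longrightarrow>
    lagr_polar \<alpha> \<beta> U V (U ** \<Omega>) V + lagr_polar \<alpha> \<beta> U V U (V ** \<Omega>) = 0"
  by (simp add: lagr_polar_def cdot_skew_hermitian_right algebra_simps)

section \<open>Geodesics in the fixed gauge\<close>

definition skew_pair :: "3 \<Rightarrow> 3 \<Rightarrow> complex \<Rightarrow> complex^3^3" where
  "skew_pair p q z = (\<chi> i j. if i = p \<and> j = q then z else if i = q \<and> j = p then - cnj z else 0)"

lemma skew_hermitian_skew_pair: "p \<noteq> q \<Longrightarrow> skew_hermitian (skew_pair p q z)"
  by (auto simp: skew_hermitian_def vec_eq_iff skew_pair_def)

locale gauge_fixed_geodesic =
  fixes \<alpha> \<beta> :: real and U :: "real \<Rightarrow> complex^3^3"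
  assumes alpha_pos: "\<alpha> > 0" and beta_pos: "\<beta> > 0"
    and geodesic: "geodesic_eq \<alpha> \<beta> U"
    and gauge: "gauge_fixed U"
begin

definition V :: "real \<Rightarrow> complex^3^3" where
  "V s = vector_derivative U (at s)"

definition A :: "real \<Rightarrow> 3 \<Rightarrow> 3 \<Rightarrow> complex" where
  "A s i j = cdot (U s $ i) (V s $ j)"

definition K :: "real \<Rightarrow> complex^3^3" where
  "K s = (\<chi> i j. A s j i)"

lemma orthonormal: "orthonormal_triple (U s)"
  using geodesic unfolding geodesic_eq_def by blast

lemma unitary: "U s ** ctranspose (U s) = mat 1" "ctranspose (U s) ** U s = mat 1"
  using orthonormal orthonormal_triple_iff_unitary matrix_left_right_inverse by blast+

lemma has_vector_derivative_U: "(U has_vector_derivative V s) (at s)"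
  using geodesic unfolding geodesic_eq_def V_def by (simp add: vector_derivative_works[symmetric])

lemma euler_lagrange:
  "tangent_vec (U t) X \<Longrightarrow>
    ((\<lambda>s. lagr_polar \<alpha> \<beta> (U s) (V s) (U s) X) has_real_derivative
      lagr_polar \<alpha> \<beta> (U t) (V t) X (V t)) (at t)"
  using geodesic unfolding geodesic_eq_def V_def dL_dV_eq dL_dU_eq by blast

lemma A_diag: "A s i i = 0"
  using gauge unfolding gauge_fixed_def A_def V_def by blast

lemma cnj_A: "cnj (A s i j) = - A s j i"
proof -
  have "((\<lambda>s. cdot (U s $ i) (U s $ j)) has_vector_derivative
      cdot (U s $ i) (V s $ j) + cdot (V s $ i) (U s $ j)) (at s)"
    using has_vector_derivative_U
    by (intro cdot.has_vector_derivative has_vector_derivative_vec_nth)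
  moreover have "(\<lambda>s. cdot (U s $ i) (U s $ j)) = (\<lambda>_. if i = j then 1 else 0)"
    using orthonormal unfolding orthonormal_triple_def by auto
  ultimately have "cdot (U s $ i) (V s $ j) + cdot (V s $ i) (U s $ j) = 0"
    using vector_derivative_unique_at has_vector_derivative_const by metis
  then show ?thesis
    unfolding A_def cnj_cdot[of "U s $ j", symmetric] by (simp add: add_eq_0_iff2)
qed

lemma skew_hermitian_K: "skew_hermitian (K s)"
  by (simp add: skew_hermitian_def vec_eq_iff K_def cnj_A)

lemma V_eq: "V s = K s ** U s"
proof -
  have "(K s ** U s) $ j $ l = (V s ** (ctranspose (U s) ** U s)) $ j $ l" for j l
    by (simp add: K_def A_def cdot_def matrix_matrix_mult_def sum_distrib_left sum_distrib_right ac_simps)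
      (rule sum.swap)
  then show ?thesis
    by (simp add: unitary vec_eq_iff)
qed

definition overlap :: "real \<Rightarrow> real \<Rightarrow> 3 \<Rightarrow> 3 \<Rightarrow> complex" where
  "overlap t s i k = cdot (U s $ i) (U t $ k)"

lemma isCont_overlap: "isCont (\<lambda>s. overlap t s i k) t"
proof -
  have "isCont U t"
    using has_vector_derivative_U has_vector_derivative_continuous by blast
  then show ?thesis
    unfolding overlap_def cdot_def by (intro continuous_intros isCont_vec_nth)
qed

lemma overlap_same: "overlap t t i k = (if i = k then 1 else 0)"
  using orthonormal unfolding overlap_def orthonormal_triple_def by blast

text \<open>The velocity is only assumed to exist pointwise; continuity of the \<open>A s i j\<close> comes from
  the Euler-Lagrange equations, tested against the fixed tangent vectors
  \<open>skew_pair p q z ** U t\<close>, whose momenta are differentiable and hence continuous.\<close>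
lemma isCont_momentum_skew_pair:
  "p \<noteq> q \<Longrightarrow> isCont (\<lambda>s. lagr_polar \<alpha> \<beta> (U s) (V s) (U s) (skew_pair p q z ** U t)) t"
  by (rule DERIV_isCont euler_lagrange tangent_vec_skew_hermitian_left orthonormal
      skew_hermitian_skew_pair)+

lemma momentum_skew_pair_eq:
  "lagr_polar \<alpha> \<beta> (U s) (V s) (U s) (skew_pair p q z ** U t) =
     (2/\<alpha>) * Re (cnj (A s 1 2) * (\<Sum>k\<in>UNIV. skew_pair p q z $ 2 $ k * overlap t s 1 k))
   + (2/\<beta>) * (Re (cnj (A s 2 3) * (\<Sum>k\<in>UNIV. skew_pair p q z $ 3 $ k * overlap t s 2 k))
              + Re (cnj (A s 1 3) * (\<Sum>k\<in>UNIV. skew_pair p q z $ 3 $ k * overlap t s 1 k)))"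
  by (simp only: lagr_polar_def A_def overlap_def cdot_matrix_mult_right)

lemma isCont_A12: "isCont (\<lambda>s. A s 1 2) t"
proof -
  define g where "g s = cnj (A s 1 2) * overlap t s 1 1" for s
  have "isCont (\<lambda>s. Re (z * g s)) t" for z
  proof -
    have eq: "(\<lambda>s. Re (z * g s)) =
        (\<lambda>s. (\<alpha>/2) * lagr_polar \<alpha> \<beta> (U s) (V s) (U s) (skew_pair 2 1 z ** U t))"
      using alpha_pos unfolding momentum_skew_pair_eq g_def
      by (simp add: sum_3 skew_pair_def ac_simps del: times_complex.sel)
    show ?thesis
      unfolding eq by (intro continuous_intros isCont_momentum_skew_pair) simp
  qed
  then have "isCont g t"
    by (rule isCont_complex_if_isCont_Re)
  then show ?thesis
    by (rule isCont_if_cnj_mult_eq[OF _ isCont_overlap[of t 1 1]]) (simp_all add: overlap_same g_def)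
qed

lemma isCont_cnj_A3_combinations:
  "isCont (\<lambda>s. cnj (A s 2 3) * overlap t s 2 1 + cnj (A s 1 3) * overlap t s 1 1) t" (is "isCont ?g1 t")
  "isCont (\<lambda>s. cnj (A s 2 3) * overlap t s 2 2 + cnj (A s 1 3) * overlap t s 1 2) t" (is "isCont ?g2 t")
proof -
  have "isCont (\<lambda>s. Re (z * ?g1 s)) t" for z
  proof -
    have eq: "(\<lambda>s. Re (z * ?g1 s)) =
        (\<lambda>s. (\<beta>/2) * lagr_polar \<alpha> \<beta> (U s) (V s) (U s) (skew_pair 3 1 z ** U t))"
      using beta_pos unfolding momentum_skew_pair_eq
      by (simp add: sum_3 skew_pair_def distrib_left ac_simps del: times_complex.sel)
    show ?thesis
      unfolding eq by (intro continuous_intros isCont_momentum_skew_pair) simp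
  qed
  then show "isCont ?g1 t"
    by (rule isCont_complex_if_isCont_Re)
  have "isCont (\<lambda>s. Re (z * ?g2 s)) t" for z
  proof -
    have eq: "(\<lambda>s. Re (z * ?g2 s)) =
        (\<lambda>s. (\<beta>/2) * (lagr_polar \<alpha> \<beta> (U s) (V s) (U s) (skew_pair 3 2 z ** U t)
          - (2/\<alpha>) * Re (cnj (A s 1 2) * (- cnj z * overlap t s 1 3))))"
      using alpha_pos beta_pos unfolding momentum_skew_pair_eq
      by (simp add: sum_3 skew_pair_def distrib_left ac_simps del: times_complex.sel)
    show ?thesis
      unfolding eq
      by (intro continuous_intros continuous_Re continuous_cnj isCont_momentum_skew_pair isCont_A12
          isCont_overlap) simp
  qed
  then show "isCont ?g2 t"
    by (rule isCont_complex_if_isCont_Re)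
qed

lemma isCont_A13_A23: "isCont (\<lambda>s. A s 1 3) t" "isCont (\<lambda>s. A s 2 3) t"
proof -
  define r where "r = overlap t"
  define g1 where "g1 s = cnj (A s 2 3) * r s 2 1 + cnj (A s 1 3) * r s 1 1" for s
  define g2 where "g2 s = cnj (A s 2 3) * r s 2 2 + cnj (A s 1 3) * r s 1 2" for s
  define d where "d s = r s 1 1 * r s 2 2 - r s 2 1 * r s 1 2" for s
  have r: "isCont (\<lambda>s. r s i k) t" for i k
    unfolding r_def by (rule isCont_overlap)
  have g: "isCont g1 t" "isCont g2 t"
    unfolding g1_def g2_def r_def by (rule isCont_cnj_A3_combinations)+
  have d: "isCont d t" "d t \<noteq> 0"
    unfolding d_def r_def by (intro continuous_intros isCont_overlap) (simp add: overlap_same)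
  have A13: "cnj (A s 1 3) * d s = g1 s * r s 2 2 - g2 s * r s 2 1" for s
    by (simp add: g1_def g2_def d_def algebra_simps)
  show "isCont (\<lambda>s. A s 1 3) t"
    by (rule isCont_if_cnj_mult_eq[OF _ d A13]) (intro continuous_intros g r)
  have A23: "cnj (A s 2 3) * d s = g2 s * r s 1 1 - g1 s * r s 1 2" for s
    by (simp add: g1_def g2_def d_def algebra_simps)
  show "isCont (\<lambda>s. A s 2 3) t"
    by (rule isCont_if_cnj_mult_eq[OF _ d A23]) (intro continuous_intros g r)
qed

text \<open>Only the factors vanishing at \<open>t\<close> are differentiable; their partners \<open>A s i j\<close> are
  merely continuous.\<close>
lemma has_real_derivative_momentum_increment:
  "((\<lambda>s. lagr_polar \<alpha> \<beta> (U s) (V s) (U s) ((U s - U t) ** \<Omega>)) has_real_derivative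
    lagr_polar \<alpha> \<beta> (U t) (V t) (U t) (V t ** \<Omega>)) (at t)"
proof -
  define y where "y i j s = cdot (U s $ i) (((U s - U t) ** \<Omega>) $ j)" for i j s
  have "((\<lambda>s. (U s - U t) ** \<Omega>) has_vector_derivative V t ** \<Omega>) (at t)"
    using matrix_mult.has_vector_derivative[OF has_vector_derivative_diff[OF
        has_vector_derivative_U has_vector_derivative_const] has_vector_derivative_const]
    by simp
  then have "(y i j has_vector_derivative
      cdot (U t $ i) ((V t ** \<Omega>) $ j) + cdot (V t $ i) (((U t - U t) ** \<Omega>) $ j)) (at t)" for i j
    unfolding y_def[abs_def]
    by (intro cdot.has_vector_derivative has_vector_derivative_vec_nth has_vector_derivative_U)
  then have "(y i j has_vector_derivative cdot (U t $ i) ((V t ** \<Omega>) $ j)) (at t)" for i j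
    by (simp add: cdot.zero_right)
  moreover have "y i j t = 0" for i j
    by (simp add: y_def cdot.zero_right)
  moreover have "isCont (\<lambda>s. cnj (A s i j)) t" if "(i, j) \<in> {(1, 2), (1, 3), (2, 3)}" for i j
    using that isCont_A12 isCont_A13_A23 by (auto intro: continuous_cnj)
  ultimately show ?thesis
    unfolding lagr_polar_def A_def[symmetric] y_def[symmetric]
    by (intro DERIV_add DERIV_cmult has_real_derivative_Re_mult_vanishing) auto
qed

text \<open>Noether's theorem for the right action of \<open>U(3)\<close>.\<close>
lemma has_real_derivative_momentum_right_action:
  assumes "skew_hermitian \<Omega>"
  shows "((\<lambda>s. lagr_polar \<alpha> \<beta> (U s) (V s) (U s) (U s ** \<Omega>)) has_real_derivative 0) (at t)"
proof -
  have "U s ** \<Omega> = U t ** \<Omega> + (U s - U t) ** \<Omega>" for s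
    by (simp add: matrix_mult.diff_left)
  then have split: "lagr_polar \<alpha> \<beta> (U s) (V s) (U s) (U s ** \<Omega>) =
      lagr_polar \<alpha> \<beta> (U s) (V s) (U s) (U t ** \<Omega>)
      + lagr_polar \<alpha> \<beta> (U s) (V s) (U s) ((U s - U t) ** \<Omega>)" for s
    by (metis lagr_polar_add)
  have "((\<lambda>s. lagr_polar \<alpha> \<beta> (U s) (V s) (U s) (U s ** \<Omega>)) has_real_derivative
      lagr_polar \<alpha> \<beta> (U t) (V t) (U t ** \<Omega>) (V t)
      + lagr_polar \<alpha> \<beta> (U t) (V t) (U t) (V t ** \<Omega>))
      (at t)"
    unfolding split
    by (intro DERIV_add euler_lagrange tangent_vec_skew_hermitian_right assms
        has_real_derivative_momentum_increment)
  then show ?thesis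
    unfolding lagr_polar_right_invariant[OF assms] .
qed

text \<open>\<open>M 0\<close> is the matrix in the exponent of the theorem; \<open>M s\<close> is built in the same
  way from \<open>A s\<close>.\<close>
definition M :: "real \<Rightarrow> complex^3^3" where
  "M s = mat3 0 (A s 2 1 / of_real \<alpha>) (A s 3 1 / of_real \<beta>)
           (- cnj (A s 2 1) / of_real \<alpha>) 0 (A s 3 2 / of_real \<beta>)
           (- cnj (A s 3 1) / of_real \<beta>) (- cnj (A s 3 2) / of_real \<beta>) 0"

definition charge :: "real \<Rightarrow> complex^3^3" where
  "charge s = ctranspose (U s) ** M s ** U s"

lemma skew_hermitian_M: "skew_hermitian (M s)"
  unfolding skew_hermitian_def vec_eq_iff forall_3 by (simp add: M_def mat3_nth)

lemma skew_hermitian_charge: "skew_hermitian (charge s)"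
  using skew_hermitian_congruence[OF skew_hermitian_M, of "ctranspose (U s)"]
  by (simp add: charge_def)

lemma K_eq: "K s = \<beta> *\<^sub>R M s + (\<alpha> - \<beta>) *\<^sub>R upper_block (M s)"
  using alpha_pos beta_pos
  unfolding vec_eq_iff forall_3 vector_add_component vector_scaleR_component
  by (simp add: K_def M_def mat3_nth upper_block_def A_diag cnj_A scaleR_conv_of_real field_simps)

lemma Re_trace_M_mult:
  assumes "skew_hermitian X"
  shows "Re (trace (M s ** X)) = - ((2/\<alpha>) * Re (cnj (A s 1 2) * X $ 2 $ 1)
    + (2/\<beta>) * (Re (cnj (A s 2 3) * X $ 3 $ 2) + Re (cnj (A s 1 3) * X $ 3 $ 1)))"
proof -
  have pair: "Re (p / of_real c * X $ i $ j) + Re ((- cnj p / of_real c) * X $ j $ i)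
      = (2/c) * Re (p * X $ i $ j)" for p c i j
  proof -
    have "X $ j $ i = - cnj (X $ i $ j)"
      using skew_hermitian_nth[OF assms, of i j] by simp
    then show ?thesis
      by (simp add: field_simps)
  qed
  have trace: "trace (M s ** X) =
      (A s 2 1 / of_real \<alpha> * X $ 2 $ 1 + (- cnj (A s 2 1) / of_real \<alpha>) * X $ 1 $ 2)
    + (A s 3 1 / of_real \<beta> * X $ 3 $ 1 + (- cnj (A s 3 1) / of_real \<beta>) * X $ 1 $ 3)
    + (A s 3 2 / of_real \<beta> * X $ 3 $ 2 + (- cnj (A s 3 2) / of_real \<beta>) * X $ 2 $ 3)"
    by (simp add: trace_def matrix_matrix_mult_def M_def sum_3 mat3_nth)
  have A: "A s 2 1 = - cnj (A s 1 2)" "A s 3 1 = - cnj (A s 1 3)" "A s 3 2 = - cnj (A s 2 3)"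
    by (simp_all add: cnj_A)
  show ?thesis
    unfolding trace plus_complex.sel pair by (simp add: A add_divide_distrib diff_divide_distrib)
qed

lemma momentum_right_action_eq_trace:
  assumes "skew_hermitian \<Omega>"
  shows "lagr_polar \<alpha> \<beta> (U s) (V s) (U s) (U s ** \<Omega>) = - Re (trace (charge s ** \<Omega>))"
proof -
  have "lagr_polar \<alpha> \<beta> (U s) (V s) (U s) (U s ** \<Omega>) =
      - Re (trace (M s ** (U s ** \<Omega> ** ctranspose (U s))))"
    unfolding Re_trace_M_mult[OF skew_hermitian_congruence[OF assms]]
    by (simp add: lagr_polar_def cdot_matrix_mult_ctranspose_nth A_def)
  also have "trace (M s ** (U s ** \<Omega> ** ctranspose (U s))) = trace (charge s ** \<Omega>)"
    unfolding charge_def matrix_mul_assoc by (metis trace_mul_sym matrix_mul_assoc)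
  finally show ?thesis .
qed

lemma charge_const: "charge s = charge 0"
proof (rule skew_hermitian_eqI[OF skew_hermitian_charge skew_hermitian_charge])
  fix \<Omega> :: "complex^3^3"
  assume \<Omega>: "skew_hermitian \<Omega>"
  have "lagr_polar \<alpha> \<beta> (U s) (V s) (U s) (U s ** \<Omega>) =
      lagr_polar \<alpha> \<beta> (U 0) (V 0) (U 0) (U 0 ** \<Omega>)"
    by (intro DERIV_isconst_all allI has_real_derivative_momentum_right_action \<Omega>)
  then show "Re (trace (charge s ** \<Omega>)) = Re (trace (charge 0 ** \<Omega>))"
    by (simp add: momentum_right_action_eq_trace[OF \<Omega>])
qed

lemma M_eq_conj_charge: "M s = U s ** charge 0 ** ctranspose (U s)"
proof -
  have "U s ** charge s ** ctranspose (U s) = (U s ** ctranspose (U s)) ** M s ** (U s ** ctranspose (U s))"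
    by (simp add: charge_def matrix_mul_assoc)
  then show ?thesis
    by (simp add: unitary charge_const[of s])
qed

lemma has_vector_derivative_M: "(M has_vector_derivative K s ** M s - M s ** K s) (at s)"
proof -
  have "((\<lambda>s. U s ** charge 0 ** ctranspose (U s)) has_vector_derivative
      U s ** charge 0 ** ctranspose (V s) + (U s ** 0 + V s ** charge 0) ** ctranspose (U s)) (at s)"
    by (intro matrix_mult.has_vector_derivative has_vector_derivative_ctranspose
        has_vector_derivative_U has_vector_derivative_const)
  moreover have "U s ** charge 0 ** ctranspose (V s) + (U s ** 0 + V s ** charge 0) ** ctranspose (U s)
      = K s ** M s - M s ** K s"
    using skew_hermitian_K[of s] unfolding M_eq_conj_charge[of s] V_eq skew_hermitian_def
    by (simp add: ctranspose_matrix_mult matrix_mul_assoc matrix_mult.minus_left matrix_mult.minus_right)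
  ultimately show ?thesis
    unfolding M_eq_conj_charge[abs_def, symmetric] by simp
qed

lemma commutator_K_M:
  "K s ** M s - M s ** K s = (\<alpha> - \<beta>) *\<^sub>R (upper_block (M s) ** M s - M s ** upper_block (M s))"
  unfolding K_eq
  by (simp add: matrix_mult.add_left matrix_mult.add_right matrix_mult.diff_left
      matrix_mult.diff_right matrix_mult.scaleR_left matrix_mult.scaleR_right algebra_simps)

lemma upper_block_M_const: "upper_block (M s) = upper_block (M 0)"
proof -
  have deriv: "((\<lambda>s. M s $ i $ j) has_vector_derivative (K t ** M t - M t ** K t) $ i $ j) (at t)"
    for i j t
    using has_vector_derivative_M[of t] unfolding has_vector_derivative_matrix_entries by blast
  have "((\<lambda>s. M s $ i $ j) has_vector_derivative 0) (at t)" if "i \<noteq> 3" "j \<noteq> 3" for i j t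
    using deriv[of i j t] upper_block_commutator_nth[OF that, of "M t"] unfolding commutator_K_M
    by simp
  then show ?thesis
    unfolding upper_block_def vec_eq_iff by (auto intro: has_vector_derivative_zero_const)
qed

definition N2 :: "complex^2^2" where
  "N2 = mat2 0 (A 0 2 1 / of_real \<alpha>) (- cnj (A 0 2 1) / of_real \<alpha>) 0"

definition G :: "real \<Rightarrow> complex^3^3" where
  "G t = blockdiag21 (mat_exp (((\<alpha> - \<beta>) * t) *\<^sub>R N2))"

definition C :: "real \<Rightarrow> complex^3^3" where
  "C t = G t ** mat_exp ((\<beta> * t) *\<^sub>R M 0) ** U 0"

lemma blockdiag20_N2: "blockdiag20 N2 = upper_block (M 0)"
  unfolding vec_eq_iff forall_3
  by (simp add: blockdiag20_def idx32_def N2_def mat2_def upper_block_def M_def mat3_nth)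

lemma has_vector_derivative_G:
  "(G has_vector_derivative ((\<alpha> - \<beta>) *\<^sub>R upper_block (M 0)) ** G s) (at s)"
  unfolding G_def[abs_def]
  using has_vector_derivative_blockdiag21[OF has_vector_derivative_mat_exp_scaled[where c = "\<alpha> - \<beta>"
        and N = N2 and t = s]]
  by (simp add: blockdiag20_matrix_mult blockdiag20_scaleR blockdiag20_N2 matrix_mult.scaleR_left)

lemma G_0: "G 0 = mat 1"
  by (simp add: G_def mat_exp_zero blockdiag21_mat)

lemma G_unitary: "ctranspose (G s) ** G s = mat 1" "G s ** ctranspose (G s) = mat 1"
proof -
  show "ctranspose (G s) ** G s = mat 1"
    using ctranspose_mult_const_if_skew_hermitian_ode[OF has_vector_derivative_G has_vector_derivative_G]
      skew_hermitian_upper_block[OF skew_hermitian_M]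
    by (simp add: G_0 skew_hermitian_def ctranspose_scaleR)
  then show "G s ** ctranspose (G s) = mat 1"
    using matrix_left_right_inverse by blast
qed

text \<open>Since the upper block of \<open>M\<close> is conserved, \<open>M\<close> evolves by the adjoint action
  of \<open>G\<close>.\<close>
lemma M_eq_conj_G: "M s = G s ** M 0 ** ctranspose (G s)"
proof -
  define B where "B = (\<alpha> - \<beta>) *\<^sub>R upper_block (M 0)"
  have B: "ctranspose B = - B"
    using skew_hermitian_upper_block[OF skew_hermitian_M] unfolding B_def skew_hermitian_def
    by (simp add: ctranspose_scaleR)
  have "((\<lambda>s. ctranspose (G s) ** M s ** G s) has_vector_derivative 0) (at t)" for t
  proof -
    have "((\<lambda>s. ctranspose (G s) ** M s ** G s) has_vector_derivative
        ctranspose (G t) ** M t ** (B ** G t)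
        + (ctranspose (G t) ** (K t ** M t - M t ** K t) + ctranspose (B ** G t) ** M t) ** G t) (at t)"
      unfolding B_def
      by (intro matrix_mult.has_vector_derivative has_vector_derivative_ctranspose
          has_vector_derivative_G has_vector_derivative_M)
    moreover have "K t ** M t - M t ** K t = B ** M t - M t ** B"
      unfolding commutator_K_M upper_block_M_const[of t] B_def
      by (simp add: matrix_mult.scaleR_left matrix_mult.scaleR_right matrix_mult.diff_left
          matrix_mult.diff_right algebra_simps)
    ultimately show ?thesis
      by (simp add: B ctranspose_matrix_mult matrix_mul_assoc matrix_mult.diff_left
          matrix_mult.diff_right matrix_mult.add_left matrix_mult.minus_left matrix_mult.minus_right)
  qed
  then have "ctranspose (G s) ** M s ** G s = M 0"
    using has_vector_derivative_zero_const[of "\<lambda>s. ctranspose (G s) ** M s ** G s" s 0]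
    by (simp add: G_0)
  then have "G s ** M 0 ** ctranspose (G s) = G s ** (ctranspose (G s) ** M s ** G s) ** ctranspose (G s)"
    by simp
  also have "\<dots> = (G s ** ctranspose (G s)) ** M s ** (G s ** ctranspose (G s))"
    by (simp add: matrix_mul_assoc)
  finally show ?thesis
    by (simp add: G_unitary)
qed

lemma has_vector_derivative_C: "(C has_vector_derivative K s ** C s) (at s)"
proof -
  define E where "E t = mat_exp ((\<beta> * t) *\<^sub>R M 0)" for t
  have "(C has_vector_derivative
      G s ** ((\<beta> *\<^sub>R M 0) ** E s) ** U 0
      + ((\<alpha> - \<beta>) *\<^sub>R upper_block (M 0)) ** G s ** E s ** U 0) (at s)"
    using matrix_mult.has_vector_derivative[OF matrix_mult.has_vector_derivative[OF
        has_vector_derivative_G has_vector_derivative_mat_exp_scaled[where c = \<beta> and N = "M 0"]]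
        has_vector_derivative_const]
    unfolding C_def[abs_def] E_def by (simp add: matrix_mul_assoc matrix_mult.add_left)
  also have "G s ** ((\<beta> *\<^sub>R M 0) ** E s) ** U 0
      + ((\<alpha> - \<beta>) *\<^sub>R upper_block (M 0)) ** G s ** E s ** U 0
      = K s ** C s"
  proof -
    have "G s ** M 0 = M s ** G s"
      unfolding M_eq_conj_G[of s] by (simp add: matrix_mul_assoc[symmetric] G_unitary)
    then show ?thesis
      unfolding K_eq upper_block_M_const[of s] C_def E_def
      by (simp add: matrix_mul_assoc matrix_mult.add_left matrix_mult.scaleR_left
          matrix_mult.scaleR_right)
  qed
  finally show ?thesis .
qed

lemma U_eq_C: "U s = C s"
proof -
  have C_0: "C 0 = U 0"
    by (simp add: C_def G_0 mat_exp_zero)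
  have U': "(U has_vector_derivative K s ** U s) (at s)" for s
    using has_vector_derivative_U V_eq by simp
  have "ctranspose (C s) ** C s = mat 1"
    using ctranspose_mult_const_if_skew_hermitian_ode[OF has_vector_derivative_C
        has_vector_derivative_C skew_hermitian_K, of s]
    by (simp add: C_0 unitary)
  then have "C s ** ctranspose (C s) = mat 1"
    using matrix_left_right_inverse by blast
  moreover have "ctranspose (C s) ** U s = mat 1"
    using ctranspose_mult_const_if_skew_hermitian_ode[OF has_vector_derivative_C U' skew_hermitian_K, of s]
    by (simp add: C_0 unitary)
  ultimately have "U s = (C s ** ctranspose (C s)) ** U s" "C s ** (ctranspose (C s) ** U s) = C s"
    by simp_all
  then show ?thesis
    by (simp add: matrix_mul_assoc)
qed
end

theorem proposition5:
  fixes \<alpha> \<beta> :: real and U :: "real \<Rightarrow> complex^3^3"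
  assumes "\<alpha> > 0" and "\<beta> > 0"
    and "geodesic_eq \<alpha> \<beta> U"
    and "gauge_fixed U"
  shows "let A0 = (\<lambda>i j. cdot (U 0 $ i) (vector_derivative U (at 0) $ j));
             G = (\<lambda>t. blockdiag21 (mat_exp (((\<alpha> - \<beta>) * t) *\<^sub>R
                    mat2 0 (A0 2 1 / of_real \<alpha>) (- cnj (A0 2 1) / of_real \<alpha>) 0)));
             M = mat3 0 (A0 2 1 / of_real \<alpha>) (A0 3 1 / of_real \<beta>)
                      (- cnj (A0 2 1) / of_real \<alpha>) 0 (A0 3 2 / of_real \<beta>)
                      (- cnj (A0 3 1) / of_real \<beta>) (- cnj (A0 3 2) / of_real \<beta>) 0
         in \<forall>t. U t = G t ** mat_exp ((\<beta> * t) *\<^sub>R M) ** U 0"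
proof -
  interpret gauge_fixed_geodesic \<alpha> \<beta> U
    using assms by unfold_locales
  have A0: "(\<lambda>i j. cdot (U 0 $ i) (vector_derivative U (at 0) $ j)) = A 0"
    by (simp add: fun_eq_iff A_def V_def)
  show ?thesis
    unfolding Let_def A0 using U_eq_C[unfolded C_def G_def N2_def M_def] by blast
qed

end
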